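(* Let $C_0>0$, $\mathcal{U}_0=e^{C_0}/(1+e^{C_0})^2$, $m\in\mathcal{M}$, and let $\{\psi_1,\dots,\psi_{D}\}$ ($D=D_m$) be an orthonormal basis (for $\langle\cdot,\cdot\rangle_n$) of $\mathrm{span}\{\phi_k,k\in m\}$. For $\beta\in\mathbb{R}^D$ put $f_\beta=\sum_{j=1}^D\beta_j\psi_j$, and let $\Lambda_m$ be the set of $\beta$ such that $f_\beta\in\mathcal{S}_m\cap\mathbb{L}_\infty(C_0)$. If $\beta^*$ is any minimizer of $\beta\mapsto\gamma(f_\beta)$ over $\Lambda_m$, then for all $\beta\in\Lambda_m$, $$\frac{\mathcal{U}_0^2}{2}\|f_\beta-f_{\beta^*}\|_n^2\le\gamma(f_\beta)-\gamma(f_{\beta^*}).$$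
   Context: Observations $(Y_1,x_1),\dots,(Y_n,x_n)\in\{0,1\}\times\mathcal{X}$, deterministic $x_i$, independent $Y_i$ with $\mathbb{E}_{f_0}(Y_i)=\pi_{f_0}(x_i)$, $\pi_f(x)=e^{f(x)}/(1+e^{f(x)})$. $\gamma_n(f)=\frac1n\sum_{i=1}^n\{\log(1+e^{f(x_i)})-Y_if(x_i)\}$, $\gamma(f)=\mathbb{E}_{f_0}[\gamma_n(f)]$. $\langle f,g\rangle_n=\frac1n\sum_i f(x_i)g(x_i)$, $\|f\|_n^2=\langle f,f\rangle_n$. A dictionary $\{\phi_1,\dots,\phi_M\}$ is fixed; $\mathcal{M}$ is the set of subsets $m\subset\{1,\dots,M\}$, $\mathcal{S}_m=\{\sum_{j\in m}\beta_j\phi_j\}$, $D_m=\dim\mathrm{span}\{\phi_j,j\in m\}$. $\mathbb{L}_\infty(C_0)=\{f:\max_{1\le i\le n}|f(x_i)|\le C_0\}$. *)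

theory Defs
  imports "HOL-Analysis.Analysis"
begin

(* Design points are x 0, ..., x (n-1) (0-based indexing of x_1..x_n). *)

definition logit_pi :: "real \<Rightarrow> real" where
  "logit_pi t = exp t / (1 + exp t)"

definition pi_f :: "('x \<Rightarrow> real) \<Rightarrow> 'x \<Rightarrow> real" where
  "pi_f f t = logit_pi (f t)"

definition gamma_n :: "nat \<Rightarrow> (nat \<Rightarrow> 'x) \<Rightarrow> (nat \<Rightarrow> real) \<Rightarrow> ('x \<Rightarrow> real) \<Rightarrow> real" where
  "gamma_n n x Y f = (1 / real n) * (\<Sum>i<n. ln (1 + exp (f (x i))) - Y i * f (x i))"

(* gamma(f) = E_{f0}[gamma_n(f)]; gamma_n is affine in Y and E(Y_i) = pi_{f0}(x_i),
   so the expectation is gamma_n with Y_i replaced by pi_{f0}(x_i). *)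
definition gamma_exp :: "nat \<Rightarrow> (nat \<Rightarrow> 'x) \<Rightarrow> ('x \<Rightarrow> real) \<Rightarrow> ('x \<Rightarrow> real) \<Rightarrow> real" where
  "gamma_exp n x f0 f = gamma_n n x (\<lambda>i. pi_f f0 (x i)) f"

definition inner_n :: "nat \<Rightarrow> (nat \<Rightarrow> 'x) \<Rightarrow> ('x \<Rightarrow> real) \<Rightarrow> ('x \<Rightarrow> real) \<Rightarrow> real" where
  "inner_n n x f g = (1 / real n) * (\<Sum>i<n. f (x i) * g (x i))"

definition norm_n :: "nat \<Rightarrow> (nat \<Rightarrow> 'x) \<Rightarrow> ('x \<Rightarrow> real) \<Rightarrow> real" where
  "norm_n n x f = sqrt (inner_n n x f f)"

definition S_m :: "(nat \<Rightarrow> 'x \<Rightarrow> real) \<Rightarrow> nat set \<Rightarrow> ('x \<Rightarrow> real) set" where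
  "S_m phi m = {f. \<exists>b. f = (\<lambda>t. \<Sum>j\<in>m. b j * phi j t)}"

definition L_inf :: "nat \<Rightarrow> (nat \<Rightarrow> 'x) \<Rightarrow> real \<Rightarrow> ('x \<Rightarrow> real) set" where
  "L_inf n x C0 = {f. \<forall>i<n. \<bar>f (x i)\<bar> \<le> C0}"

definition f_beta :: "nat \<Rightarrow> (nat \<Rightarrow> 'x \<Rightarrow> real) \<Rightarrow> (nat \<Rightarrow> real) \<Rightarrow> 'x \<Rightarrow> real" where
  "f_beta D psi \<beta> = (\<lambda>t. \<Sum>j<D. \<beta> j * psi j t)"

(* psi_0..psi_{D-1} is an orthonormal basis, for <.,.>_n, of span{phi_k, k in m}:
   each psi_j lies in the span, they are orthonormal, and every phi_k (k in m)
   is (as an element of the space with inner product <.,.>_n, i.e. on the design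
   points) a linear combination of them. *)
definition onb_n :: "nat \<Rightarrow> (nat \<Rightarrow> 'x) \<Rightarrow> (nat \<Rightarrow> 'x \<Rightarrow> real) \<Rightarrow> nat set \<Rightarrow> nat \<Rightarrow> (nat \<Rightarrow> 'x \<Rightarrow> real) \<Rightarrow> bool" where
  "onb_n n x phi m D psi \<longleftrightarrow>
     (\<forall>j<D. psi j \<in> S_m phi m) \<and>
     (\<forall>j<D. \<forall>k<D. inner_n n x (psi j) (psi k) = (if j = k then 1 else 0)) \<and>
     (\<forall>k\<in>m. \<exists>c. \<forall>i<n. phi k (x i) = (\<Sum>j<D. c j * psi j (x i)))"

definition Lambda_m :: "nat \<Rightarrow> (nat \<Rightarrow> 'x) \<Rightarrow> (nat \<Rightarrow> 'x \<Rightarrow> real) \<Rightarrow> nat set \<Rightarrow> real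
     \<Rightarrow> nat \<Rightarrow> (nat \<Rightarrow> 'x \<Rightarrow> real) \<Rightarrow> (nat \<Rightarrow> real) set" where
  "Lambda_m n x phi m C0 D psi = {\<beta>. f_beta D psi \<beta> \<in> S_m phi m \<inter> L_inf n x C0}"

end

theory Submission
  imports Defs
begin

text \<open>On \<open>[-C, C]\<close> the second derivative \<open>e\<^sup>t/(1+e\<^sup>t)\<^sup>2\<close> of the
  softplus function \<open>t \<mapsto> log(1 + e\<^sup>t)\<close> is at least \<open>U = e\<^sup>C/(1+e\<^sup>C)\<^sup>2\<close>, so the
  contrast \<open>\<gamma>\<close> is \<open>U\<close>-strongly convex in the values \<open>f(x\<^sub>i)\<close> along segments
  inside \<open>\<Lambda>\<^sub>m\<close>. Comparing the minimiser \<open>f\<^sub>\<beta>\<^sub>*\<close> with the midpoint of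
  \<open>f\<^sub>\<beta>\<^sub>*\<close> and \<open>f\<^sub>\<beta>\<close>, which again lies in the convex set \<open>\<Lambda>\<^sub>m\<close>, gives
  \<open>U/4 \<parallel>f\<^sub>\<beta> - f\<^sub>\<beta>\<^sub>*\<parallel>\<^sub>n\<^sup>2 \<le> \<gamma>(f\<^sub>\<beta>) - \<gamma>(f\<^sub>\<beta>\<^sub>*)\<close>; since \<open>U \<le> 1/4\<close>, this is
  stronger than the claimed bound with constant \<open>U\<^sup>2/2\<close>.\<close>

lemma logistic_density_le_quarter:
  fixes C :: real
  shows "exp C / (1 + exp C)^2 \<le> 1/4"
proof -
  have "(1 + exp C)^2 = (1 - exp C)^2 + 4 * exp C"
    by (simp add: power2_eq_square algebra_simps)
  then have "4 * exp C \<le> (1 + exp C)^2"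
    by (metis le_add_same_cancel2 zero_le_power2)
  then show ?thesis
    by (simp add: divide_simps)
qed

lemma logistic_density_ge:
  fixes C u :: real
  assumes "\<bar>u\<bar> \<le> C"
  shows "exp C / (1 + exp C)^2 \<le> exp u / (1 + exp u)^2"
proof -
  define a c where "a = exp u" and "c = exp C"
  have "a \<le> c"
    unfolding a_def c_def using assms by simp
  have "exp (- C) \<le> a"
    unfolding a_def using assms by simp
  then have "1 \<le> a * c"
    unfolding c_def by (simp add: exp_minus field_simps)
  have "(c - a) * (a * c - 1) \<ge> 0"
    using \<open>a \<le> c\<close> \<open>1 \<le> a * c\<close> by simp
  then have "c * (1 + a)^2 \<le> a * (1 + c)^2"
    by (simp add: algebra_simps power2_eq_square)
  moreover have "a > 0" "c > 0"
    unfolding a_def c_def by auto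
  ultimately show ?thesis
    unfolding a_def [symmetric] c_def [symmetric] by (simp add: divide_simps mult.commute)
qed

lemma convex_on_softplus_minus_quadratic:
  fixes C :: real
  defines "U \<equiv> exp C / (1 + exp C)^2"
  shows "convex_on {-C..C} (\<lambda>t. ln (1 + exp t) - U/2 * t^2)"
proof (rule f''_ge0_imp_convex [where f' = "\<lambda>t. exp t / (1 + exp t) - U * t"
      and f'' = "\<lambda>t. exp t / (1 + exp t)^2 - U"])
  fix t :: real
  assume t: "t \<in> {-C..C}"
  have pos: "1 + exp t > 0"
    by (smt (verit) exp_gt_zero)
  show "((\<lambda>t. ln (1 + exp t) - U/2 * t^2) has_real_derivative exp t / (1 + exp t) - U * t) (at t)"
    by (rule derivative_eq_intros refl | use pos in \<open>simp add: field_simps\<close>)+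
  show "((\<lambda>t. exp t / (1 + exp t) - U * t) has_real_derivative exp t / (1 + exp t)^2 - U) (at t)"
    by (rule derivative_eq_intros refl | use pos in \<open>simp add: field_simps power2_eq_square\<close>)+
  show "0 \<le> exp t / (1 + exp t)^2 - U"
    using logistic_density_ge [of t C] t unfolding U_def by auto
qed simp

lemma softplus_midpoint_strongly_convex:
  fixes C u v :: real
  assumes "\<bar>u\<bar> \<le> C" "\<bar>v\<bar> \<le> C"
  defines "U \<equiv> exp C / (1 + exp C)^2"
  shows "ln (1 + exp ((u + v)/2))
           \<le> (ln (1 + exp u) + ln (1 + exp v))/2 - U/8 * (v - u)^2"
proof -
  define h where "h = (\<lambda>t::real. ln (1 + exp t) - U/2 * t^2)"
  have "h ((1 - 1/2) *\<^sub>R u + (1/2) *\<^sub>R v) \<le> (1 - 1/2) * h u + (1/2) * h v"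
    using convex_on_softplus_minus_quadratic [of C] assms
    by (intro convex_onD) (auto simp: h_def U_def)
  then have "h ((u + v)/2) \<le> (h u + h v)/2"
    by (simp add: field_simps)
  then show ?thesis
    unfolding h_def by (simp add: field_simps power2_eq_square)
qed

lemma norm_n_squared:
  "(norm_n n x f)^2 = (1 / real n) * (\<Sum>i<n. (f (x i))^2)"
  unfolding norm_n_def inner_n_def by (simp add: sum_nonneg power2_eq_square)

lemma gamma_exp_midpoint:
  assumes "\<forall>i<n. \<bar>f (x i)\<bar> \<le> C" "\<forall>i<n. \<bar>g (x i)\<bar> \<le> C"
  defines "U \<equiv> exp C / (1 + exp C)^2"
  shows "gamma_exp n x f0 (\<lambda>t. (f t + g t)/2)
           \<le> (gamma_exp n x f0 f + gamma_exp n x f0 g)/2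
              - U/8 * (norm_n n x (\<lambda>t. g t - f t))^2"
proof -
  define y where "y i = pi_f f0 (x i)" for i
  define T where "T h i = ln (1 + exp (h (x i))) - y i * h (x i)" for h i
  have gamma: "gamma_exp n x f0 h = (1 / real n) * (\<Sum>i<n. T h i)" for h
    unfolding gamma_exp_def gamma_n_def T_def y_def by simp
  have "T (\<lambda>t. (f t + g t)/2) i \<le> (T f i + T g i)/2 - U/8 * (g (x i) - f (x i))^2"
    if "i < n" for i
    using softplus_midpoint_strongly_convex [of "f (x i)" C "g (x i)"] assms that
    by (simp add: T_def U_def field_simps)
  then have "(\<Sum>i<n. T (\<lambda>t. (f t + g t)/2) i)
               \<le> (\<Sum>i<n. (T f i + T g i)/2 - U/8 * (g (x i) - f (x i))^2)"
    by (intro sum_mono) auto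
  then have "(1 / real n) * (\<Sum>i<n. T (\<lambda>t. (f t + g t)/2) i)
               \<le> (1 / real n) * (\<Sum>i<n. (T f i + T g i)/2 - U/8 * (g (x i) - f (x i))^2)"
    by (intro mult_left_mono) auto
  then show ?thesis
    unfolding gamma norm_n_squared
    by (simp add: sum_subtractf sum.distrib sum_divide_distrib [symmetric]
        sum_distrib_left [symmetric] algebra_simps)
qed

lemma f_beta_linear_combination:
  "f_beta D psi (\<lambda>j. a * \<beta> j + b * \<beta>' j) = (\<lambda>t. a * f_beta D psi \<beta> t + b * f_beta D psi \<beta>' t)"
  unfolding f_beta_def by (simp add: sum.distrib sum_distrib_left algebra_simps)

lemma S_m_linear_combination:
  assumes "f \<in> S_m phi m" "g \<in> S_m phi m"
  shows "(\<lambda>t. a * f t + b * g t) \<in> S_m phi m"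
proof -
  obtain bf bg where "f = (\<lambda>t. \<Sum>j\<in>m. bf j * phi j t)" "g = (\<lambda>t. \<Sum>j\<in>m. bg j * phi j t)"
    using assms unfolding S_m_def by blast
  then have "(\<lambda>t. a * f t + b * g t) = (\<lambda>t. \<Sum>j\<in>m. (a * bf j + b * bg j) * phi j t)"
    by (simp add: sum.distrib sum_distrib_left algebra_simps)
  then show ?thesis
    unfolding S_m_def by (intro CollectI exI [of _ "\<lambda>j. a * bf j + b * bg j"])
qed

lemma L_inf_convex_combination:
  assumes "f \<in> L_inf n x C" "g \<in> L_inf n x C" "0 \<le> t" "t \<le> 1"
  shows "(\<lambda>s. (1 - t) * f s + t * g s) \<in> L_inf n x C"
proof -
  have "\<bar>(1 - t) * f (x i) + t * g (x i)\<bar> \<le> C" if "i < n" for i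
  proof -
    have "\<bar>(1 - t) * f (x i) + t * g (x i)\<bar> \<le> (1 - t) * \<bar>f (x i)\<bar> + t * \<bar>g (x i)\<bar>"
      using assms(3,4) by (simp add: abs_triangle_ineq [THEN order_trans] abs_mult)
    also have "\<dots> \<le> (1 - t) * C + t * C"
      using assms that unfolding L_inf_def by (intro add_mono mult_left_mono) auto
    finally show ?thesis
      by (simp add: algebra_simps)
  qed
  then show ?thesis
    unfolding L_inf_def by blast
qed

lemma Lambda_m_convex_combination:
  assumes "\<beta> \<in> Lambda_m n x phi m C D psi" "\<beta>' \<in> Lambda_m n x phi m C D psi" "0 \<le> t" "t \<le> 1"
  shows "(\<lambda>j. (1 - t) * \<beta> j + t * \<beta>' j) \<in> Lambda_m n x phi m C D psi"
  using assms S_m_linear_combination L_inf_convex_combination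
  unfolding Lambda_m_def by (auto simp only: f_beta_linear_combination Int_iff mem_Collect_eq)

theorem lemma6p2:
  fixes n M D :: nat and x :: "nat \<Rightarrow> 'x" and f0 :: "'x \<Rightarrow> real"
    and phi psi :: "nat \<Rightarrow> 'x \<Rightarrow> real" and m :: "nat set"
    and C0 :: real and \<beta>s \<beta> :: "nat \<Rightarrow> real"
  assumes "n > 0"
    and "C0 > 0"
    and "m \<subseteq> {1..M}"
    and "onb_n n x phi m D psi"
    and "\<beta>s \<in> Lambda_m n x phi m C0 D psi"
    and "\<forall>\<beta>'\<in>Lambda_m n x phi m C0 D psi.
           gamma_exp n x f0 (f_beta D psi \<beta>s) \<le> gamma_exp n x f0 (f_beta D psi \<beta>')"
    and "\<beta> \<in> Lambda_m n x phi m C0 D psi"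
  shows "(exp C0 / (1 + exp C0)^2)^2 / 2
           * (norm_n n x (\<lambda>t. f_beta D psi \<beta> t - f_beta D psi \<beta>s t))^2
         \<le> gamma_exp n x f0 (f_beta D psi \<beta>) - gamma_exp n x f0 (f_beta D psi \<beta>s)"
proof -
  define U where "U = exp C0 / (1 + exp C0)^2"
  define fs fb where "fs = f_beta D psi \<beta>s" and "fb = f_beta D psi \<beta>"
  define N where "N = (norm_n n x (\<lambda>t. fb t - fs t))^2"
  have "(\<lambda>j. (1 - 1/2) * \<beta>s j + 1/2 * \<beta> j) \<in> Lambda_m n x phi m C0 D psi"
    using assms(5,7) by (rule Lambda_m_convex_combination) auto
  moreover have "f_beta D psi (\<lambda>j. (1 - 1/2) * \<beta>s j + 1/2 * \<beta> j) = (\<lambda>t. (fs t + fb t)/2)"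
    unfolding f_beta_linear_combination fs_def fb_def by (simp add: field_simps)
  ultimately have "gamma_exp n x f0 fs \<le> gamma_exp n x f0 (\<lambda>t. (fs t + fb t)/2)"
    using assms(6) unfolding fs_def by metis
  also have "\<dots> \<le> (gamma_exp n x f0 fs + gamma_exp n x f0 fb)/2 - U/8 * N"
    using assms(5,7) unfolding U_def N_def fs_def fb_def Lambda_m_def L_inf_def
    by (intro gamma_exp_midpoint) auto
  finally have "U/4 * N \<le> gamma_exp n x f0 fb - gamma_exp n x f0 fs"
    by (simp add: field_simps)
  moreover have "U^2/2 \<le> U/4"
  proof -
    have "0 \<le> U" "U \<le> 1/4"
      using logistic_density_le_quarter [of C0] unfolding U_def by auto
    then show ?thesis
      using mult_left_mono [of U "1/4" U] by (simp add: power2_eq_square)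
  qed
  ultimately show ?thesis
    unfolding U_def [symmetric] N_def fs_def [symmetric] fb_def [symmetric]
    by (smt (verit) mult_right_mono zero_le_power2)
qed

end
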